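(* Let $X$ be locally connected. If $(X,\mathbb{F})$ is sensitive, then $(\mathcal{F}(X),\overline{\mathbb{F}})$ is pointwise sensitive.
   Context: $(X,d)$ compact metric, $\mathbb{F}=(f_n)$ continuous self-maps, $\omega_n=f_n\circ\cdots\circ f_1$. Sensitive: there is $\delta>0$ such that for every $x$ and every neighborhood $U$ of $x$ there is $n$ with $\mathrm{diam}(\omega_n(U))>\delta$. Pointwise sensitive: for every point $x$ there is $\delta_x>0$ such that every neighborhood $U$ of $x$ admits $n$ with $\mathrm{diam}(\omega_n(U))>\delta_x$. $\mathcal{F}(X)$: non-empty finite subsets with the Hausdorff metric $d_H$; induced system $\overline{\omega}_n(A)=\omega_n(A)$, notions defined using $d_H$. *)

theory Defs
  imports "HOL-Analysis.Analysis"
begin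

text \<open>Non-autonomous system: maps f 1, f 2, ... (f 0 is irrelevant).
  omega f n = f n o ... o f 1, omega f 0 = id.\<close>
fun omega :: "(nat \<Rightarrow> 'a \<Rightarrow> 'a) \<Rightarrow> nat \<Rightarrow> 'a \<Rightarrow> 'a" where
  "omega f 0 = id"
| "omega f (Suc n) = f (Suc n) \<circ> omega f n"

definition nbhd :: "('b \<Rightarrow> 'b \<Rightarrow> real) \<Rightarrow> 'b set \<Rightarrow> 'b \<Rightarrow> 'b set \<Rightarrow> bool" where
  "nbhd d S x U \<longleftrightarrow> U \<subseteq> S \<and> (\<exists>e>0. {y \<in> S. d x y < e} \<subseteq> U)"

definition gdiam :: "('b \<Rightarrow> 'b \<Rightarrow> real) \<Rightarrow> 'b set \<Rightarrow> real" where
  "gdiam d U = Sup {d x y | x y. x \<in> U \<and> y \<in> U}"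

definition sensitive_gen ::
  "('b \<Rightarrow> 'b \<Rightarrow> real) \<Rightarrow> 'b set \<Rightarrow> (nat \<Rightarrow> 'b \<Rightarrow> 'b) \<Rightarrow> bool" where
  "sensitive_gen d S g \<longleftrightarrow>
     (\<exists>\<delta>>0. \<forall>x\<in>S. \<forall>U. nbhd d S x U \<longrightarrow> (\<exists>n\<ge>1. gdiam d (g n ` U) > \<delta>))"

definition pointwise_sensitive_gen ::
  "('b \<Rightarrow> 'b \<Rightarrow> real) \<Rightarrow> 'b set \<Rightarrow> (nat \<Rightarrow> 'b \<Rightarrow> 'b) \<Rightarrow> bool" where
  "pointwise_sensitive_gen d S g \<longleftrightarrow>
     (\<forall>x\<in>S. \<exists>\<delta>>0. \<forall>U. nbhd d S x U \<longrightarrow> (\<exists>n\<ge>1. gdiam d (g n ` U) > \<delta>))"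

definition hausdorff_dist :: "'a::metric_space set \<Rightarrow> 'a set \<Rightarrow> real" where
  "hausdorff_dist A B = max (SUP a\<in>A. infdist a B) (SUP b\<in>B. infdist b A)"

definition finite_hyperspace :: "'a set \<Rightarrow> 'a set set" where
  "finite_hyperspace X = {A. A \<subseteq> X \<and> finite A \<and> A \<noteq> {}}"

definition induced :: "(nat \<Rightarrow> 'a \<Rightarrow> 'a) \<Rightarrow> nat \<Rightarrow> 'a set \<Rightarrow> 'a set" where
  "induced g n A = g n ` A"

end

theory Submission
  imports Defs
begin

text \<open>Let A have k points and let \<delta> be a sensitivity constant of the base system.
  Every neighbourhood of A in the hyperspace contains the sets A \<union> {z} for z in a connected
  neighbourhood V of a point of A. Some \<omega> n stretches V to diameter > \<delta>; a connected set of
  diameter > \<delta> cannot lie within distance \<delta>/(2k) of the at most k points of \<omega> n (A), because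
  the distances from a fixed point of a connected set form an interval of length at most the total
  length of the covering intervals. So some z escapes, and \<omega> n (A \<union> {z}) is Hausdorff-distance
  at least \<delta>/(2k) away from \<omega> n (A).\<close>

lemma interval_length_le_card_cover:
  fixes c :: "'p \<Rightarrow> real"
  assumes fin: "finite P" and t: "t \<ge> 0" and r: "r \<ge> 0"
    and cov: "{0..t} \<subseteq> (\<Union>p\<in>P. {c p - r <..< c p + r})"
  shows "t \<le> 2 * r * card P"
proof -
  have "t = measure lborel {0..t}" using t by simp
  also have "\<dots> \<le> measure lborel (\<Union>p\<in>P. {c p - r <..< c p + r})"
  proof (rule measure_mono_fmeasurable[OF cov])
    show "{0..t} \<in> sets lborel" by simp
    have "\<And>p. {c p - r <..< c p + r} \<in> fmeasurable lborel"
      using r by (simp add: fmeasurable_def)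
    then show "(\<Union>p\<in>P. {c p - r <..< c p + r}) \<in> fmeasurable lborel"
      by (intro fmeasurable.finite_UN fin) auto
  qed
  also have "\<dots> \<le> (\<Sum>p\<in>P. measure lborel {c p - r <..< c p + r})"
    by (rule measure_UNION_le[OF fin]) auto
  also have "\<dots> \<le> (\<Sum>p\<in>P. 2 * r)"
    by (intro sum_mono) (use r in auto)
  finally show ?thesis by (simp add: mult.commute)
qed

lemma connected_dist_le_card_cover:
  fixes C :: "'a::metric_space set"
  assumes C: "connected C" and fin: "finite P" and cov: "\<forall>z\<in>C. \<exists>p\<in>P. dist z p < r"
    and xy: "x \<in> C" "y \<in> C"
  shows "dist x y \<le> 2 * r * card P"
proof -
  let ?D = "(\<lambda>z. dist x z) ` C"
  have "is_interval ?D"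
    unfolding is_interval_connected_1 using C by (intro connected_continuous_image continuous_intros)
  moreover have "0 \<in> ?D" "dist x y \<in> ?D" using xy by force+
  ultimately have "{0..dist x y} \<subseteq> ?D"
    by (auto simp: is_interval_1)
  also have "?D \<subseteq> (\<Union>p\<in>P. {dist x p - r <..< dist x p + r})"
  proof
    fix u assume "u \<in> ?D"
    then obtain z where z: "z \<in> C" "u = dist x z" by blast
    then obtain p where "p \<in> P" "dist z p < r" using cov by blast
    moreover have "\<bar>dist x z - dist x p\<bar> \<le> dist z p"
      by (metis abs_le_iff dist_commute dist_triangle3 diff_le_eq minus_diff_eq)
    ultimately show "u \<in> (\<Union>p\<in>P. {dist x p - r <..< dist x p + r})" using z by force
  qed
  finally have "{0..dist x y} \<subseteq> (\<Union>p\<in>P. {dist x p - r <..< dist x p + r})" .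
  moreover have "r \<ge> 0"
    using cov xy by (meson dual_order.trans less_imp_le zero_le_dist)
  ultimately show ?thesis
    using interval_length_le_card_cover[OF fin] by simp
qed

lemma gdiam_gtE:
  assumes "S \<noteq> {}" "gdiam d S > t"
  obtains x y where "x \<in> S" "y \<in> S" "d x y > t"
proof -
  have "{d x y | x y. x \<in> S \<and> y \<in> S} \<noteq> {}" using assms(1) by blast
  then show thesis
    using less_cSupD[OF _ assms(2)[unfolded gdiam_def]] that by blast
qed

lemma connected_escapes_finite_set:
  fixes C :: "'a::metric_space set" and r :: real
  assumes "connected C" "C \<noteq> {}" "finite P" "gdiam dist C > 2 * r * card P"
  shows "\<exists>z\<in>C. \<forall>p\<in>P. r \<le> dist z p"
proof (rule ccontr)
  assume "\<not> ?thesis"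
  then have "\<forall>z\<in>C. \<exists>p\<in>P. dist z p < r" by (auto simp: not_le)
  moreover obtain x y where "x \<in> C" "y \<in> C" "dist x y > 2 * r * card P"
    using gdiam_gtE[OF assms(2,4)] .
  ultimately have "dist x y \<le> 2 * r * card P"
    using connected_dist_le_card_cover[OF assms(1,3)] by blast
  with \<open>dist x y > 2 * r * card P\<close> show False by simp
qed

lemma locally_connected_nbhd_in_ball:
  assumes "locally connected X" "a \<in> X" "e > 0"
  obtains V where "connected V" "nbhd dist X a V" "V \<subseteq> ball a e"
proof -
  have "openin (top_of_set X) (X \<inter> ball a e)"
    by (simp add: openin_open_Int)
  then obtain U V where U: "openin (top_of_set X) U" "a \<in> U" "U \<subseteq> V"
    and V: "connected V" "V \<subseteq> X \<inter> ball a e"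
    using locallyE[OF assms(1)] assms(2,3) by (metis IntI centre_in_ball)
  obtain e' where "e' > 0" "\<forall>x\<in>X. dist x a < e' \<longrightarrow> x \<in> U"
    using U unfolding openin_euclidean_subtopology_iff by blast
  then have "nbhd dist X a V"
    unfolding nbhd_def using U(3) V(2) by (auto simp: dist_commute intro!: exI[of _ e'])
  then show thesis using that V by blast
qed

lemma omega_image_subset:
  fixes f :: "nat \<Rightarrow> 'a \<Rightarrow> 'a"
  assumes "\<And>n. n \<ge> 1 \<Longrightarrow> f n ` X \<subseteq> X"
  shows "omega f n ` X \<subseteq> X"
  by (induction n) (use assms in \<open>auto simp: image_subset_iff\<close>)

lemma continuous_on_omega:
  fixes f :: "nat \<Rightarrow> 'a::topological_space \<Rightarrow> 'a"
  assumes "\<And>n. n \<ge> 1 \<Longrightarrow> continuous_on X (f n)"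
    and "\<And>n. n \<ge> 1 \<Longrightarrow> f n ` X \<subseteq> X"
  shows "continuous_on X (omega f n)"
proof (induction n)
  case (Suc n)
  have "continuous_on (omega f n ` X) (f (Suc n))"
    using assms omega_image_subset[of f X n, OF assms(2)] by (auto intro: continuous_on_subset)
  then show ?case
    using Suc continuous_on_compose by fastforce
qed simp

lemma hausdorff_dist_le:
  assumes "finite A" "A \<noteq> {}" "finite B" "B \<noteq> {}"
    and "\<And>a. a \<in> A \<Longrightarrow> infdist a B \<le> M" "\<And>b. b \<in> B \<Longrightarrow> infdist b A \<le> M"
  shows "hausdorff_dist A B \<le> M"
  unfolding hausdorff_dist_def using assms by (auto intro!: cSUP_least)

lemma infdist_le_hausdorff_dist:
  assumes "finite A" "finite B" "b \<in> B"
  shows "infdist b A \<le> hausdorff_dist A B"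
proof -
  have "infdist b A \<le> (SUP b\<in>B. infdist b A)"
    using assms by (intro cSUP_upper) auto
  then show ?thesis unfolding hausdorff_dist_def by linarith
qed

lemma hausdorff_dist_self:
  assumes "finite A" "A \<noteq> {}"
  shows "hausdorff_dist A A = 0"
  unfolding hausdorff_dist_def using assms by simp

lemma hausdorff_dist_insert_le:
  assumes "finite A" "a \<in> A"
  shows "hausdorff_dist A (insert z A) \<le> dist a z"
  using assms infdist_le[OF assms(2), of z]
  by (intro hausdorff_dist_le) (auto simp: dist_commute)

lemma hausdorff_dist_le_diameter:
  assumes "bounded X" "A \<in> finite_hyperspace X" "B \<in> finite_hyperspace X"
  shows "hausdorff_dist A B \<le> diameter X"
proof -
  have "A \<subseteq> X" "B \<subseteq> X" "A \<noteq> {}" "B \<noteq> {}"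
    using assms(2,3) by (auto simp: finite_hyperspace_def)
  then have "infdist a C \<le> diameter X" if "a \<in> A \<union> B" "C \<in> {A, B}" for a C
    using that diameter_bounded_bound[OF assms(1)] infdist_le by (metis Un_iff dual_order.trans
        ex_in_conv insert_iff subsetD)
  then show ?thesis
    using assms(2,3) by (intro hausdorff_dist_le) (auto simp: finite_hyperspace_def)
qed

lemma hausdorff_dist_image_le_gdiam:
  assumes "bounded X" "g ` X \<subseteq> X" "U \<subseteq> finite_hyperspace X" "A \<in> U" "B \<in> U"
  shows "hausdorff_dist (g ` A) (g ` B) \<le> gdiam hausdorff_dist ((`) g ` U)"
  unfolding gdiam_def
proof (rule cSup_upper)
  have "(`) g ` U \<subseteq> finite_hyperspace X"
    using assms(2,3) by (auto simp: finite_hyperspace_def)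
  then show "bdd_above {hausdorff_dist C D | C D. C \<in> (`) g ` U \<and> D \<in> (`) g ` U}"
    by (intro bdd_aboveI[of _ "diameter X"]) (use hausdorff_dist_le_diameter[OF assms(1)] in blast)
qed (use assms(4,5) in blast)

lemma nbhd_hyperspace_insert:
  assumes "nbhd hausdorff_dist (finite_hyperspace X) A U" "A \<in> finite_hyperspace X" "a \<in> A"
  obtains e where "e > 0" "\<And>z. z \<in> X \<Longrightarrow> dist a z < e \<Longrightarrow> insert z A \<in> U"
proof -
  obtain e where "e > 0" and eU: "{B \<in> finite_hyperspace X. hausdorff_dist A B < e} \<subseteq> U"
    using assms(1) unfolding nbhd_def by blast
  have "insert z A \<in> U" if "z \<in> X" "dist a z < e" for z
  proof (rule subsetD[OF eU], intro CollectI conjI)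
    show "insert z A \<in> finite_hyperspace X"
      using assms(2) that(1) by (auto simp: finite_hyperspace_def)
    have "hausdorff_dist A (insert z A) \<le> dist a z"
      using assms(2,3) by (intro hausdorff_dist_insert_le) (auto simp: finite_hyperspace_def)
    then show "hausdorff_dist A (insert z A) < e"
      using that(2) by linarith
  qed
  then show thesis using that \<open>e > 0\<close> by blast
qed

lemma nbhd_self_mem:
  assumes "nbhd d S x U" "x \<in> S" "d x x = 0"
  shows "x \<in> U"
  using assms unfolding nbhd_def by auto

lemma hyperspace_nbhd_contains_far_image:
  fixes g :: "nat \<Rightarrow> 'a::metric_space \<Rightarrow> 'a"
  assumes cont: "\<And>n. continuous_on X (g n)" and "locally connected X" and "\<delta> > 0"
    and sens: "\<And>x V. x \<in> X \<Longrightarrow> nbhd dist X x V \<Longrightarrow> \<exists>n\<ge>1. gdiam dist (g n ` V) > \<delta>"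
    and A: "A \<in> finite_hyperspace X" and U: "nbhd hausdorff_dist (finite_hyperspace X) A U"
  obtains n B where "n \<ge> 1" "B \<in> U" "\<delta> / (2 * card A) \<le> hausdorff_dist (g n ` A) (g n ` B)"
proof -
  define r where "r = \<delta> / (2 * card A)"
  from A have AX: "A \<subseteq> X" and finA: "finite A" and "card A > 0"
    by (auto simp: finite_hyperspace_def card_gt_0_iff)
  then obtain a where a: "a \<in> A" by fastforce
  obtain e where "e > 0" and ins: "\<And>z. z \<in> X \<Longrightarrow> dist a z < e \<Longrightarrow> insert z A \<in> U"
    using nbhd_hyperspace_insert[OF U A a] by blast
  obtain V where V: "connected V" "nbhd dist X a V" "V \<subseteq> ball a e"
    using locally_connected_nbhd_in_ball[OF assms(2) _ \<open>e > 0\<close>] a AX by blast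
  have "V \<subseteq> X" "a \<in> V" using V(2) a AX by (auto simp: nbhd_def)
  obtain n where "n \<ge> 1" and stretch: "gdiam dist (g n ` V) > \<delta>"
    using sens V(2) a AX by blast
  have "2 * r * card (g n ` A) \<le> \<delta>"
    using \<open>\<delta> > 0\<close> \<open>card A > 0\<close> card_image_le[OF finA, of "g n"]
    by (simp add: r_def field_simps)
  moreover have "connected (g n ` V)"
    using cont V(1) \<open>V \<subseteq> X\<close> by (meson connected_continuous_image continuous_on_subset)
  ultimately obtain z where "z \<in> V" and far: "\<forall>p\<in>g n ` A. r \<le> dist (g n z) p"
    using connected_escapes_finite_set[of "g n ` V" "g n ` A" r] stretch finA \<open>a \<in> V\<close>
    by auto
  then have "insert z A \<in> U"
    using ins \<open>V \<subseteq> X\<close> V(3) by (auto simp: subset_iff)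
  have "r \<le> infdist (g n z) (g n ` A)"
    using far a unfolding infdist_def by (auto intro!: cINF_greatest)
  also have "\<dots> \<le> hausdorff_dist (g n ` A) (g n ` insert z A)"
    using finA by (intro infdist_le_hausdorff_dist) auto
  finally show thesis
    using that \<open>n \<ge> 1\<close> \<open>insert z A \<in> U\<close> unfolding r_def by blast
qed

theorem mainTheorem11:
  fixes X :: "'a::metric_space set" and f :: "nat \<Rightarrow> 'a \<Rightarrow> 'a"
  assumes "compact X"
    and "\<And>n. n \<ge> 1 \<Longrightarrow> continuous_on X (f n)"
    and "\<And>n. n \<ge> 1 \<Longrightarrow> f n ` X \<subseteq> X"
    and "locally connected X"
    and "sensitive_gen dist X (omega f)"
  shows "pointwise_sensitive_gen hausdorff_dist (finite_hyperspace X) (induced (omega f))"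
  unfolding pointwise_sensitive_gen_def
proof
  fix A assume A: "A \<in> finite_hyperspace X"
  obtain \<delta> where "\<delta> > 0" and sens:
    "\<And>x V. x \<in> X \<Longrightarrow> nbhd dist X x V \<Longrightarrow> \<exists>n\<ge>1. gdiam dist (omega f n ` V) > \<delta>"
    using assms(5) unfolding sensitive_gen_def by blast
  have cont: "\<And>n. continuous_on X (omega f n)"
    using continuous_on_omega[OF assms(2,3)] .
  define r where "r = \<delta> / (2 * card A)"
  have "r > 0"
    using \<open>\<delta> > 0\<close> A by (auto simp: r_def finite_hyperspace_def card_gt_0_iff)
  have "\<exists>n\<ge>1. gdiam hausdorff_dist (induced (omega f) n ` U) > r / 2"
    if U: "nbhd hausdorff_dist (finite_hyperspace X) A U" for U
  proof -
    obtain n B where "n \<ge> 1" "B \<in> U" and far: "r \<le> hausdorff_dist (omega f n ` A) (omega f n ` B)"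
      using cont assms(4) \<open>\<delta> > 0\<close> sens A U unfolding r_def
      by (rule hyperspace_nbhd_contains_far_image)
    have "A \<in> U"
      using A by (intro nbhd_self_mem[OF U]) (auto simp: hausdorff_dist_self finite_hyperspace_def)
    moreover have "U \<subseteq> finite_hyperspace X"
      using U by (simp add: nbhd_def)
    ultimately have "hausdorff_dist (omega f n ` A) (omega f n ` B)
        \<le> gdiam hausdorff_dist (induced (omega f) n ` U)"
      unfolding induced_def using \<open>B \<in> U\<close>
      by (intro hausdorff_dist_image_le_gdiam[OF compact_imp_bounded[OF assms(1)]
            omega_image_subset[of f X n, OF assms(3)]])
    then show ?thesis
      using far \<open>n \<ge> 1\<close> \<open>r > 0\<close> by (intro exI[of _ n]) auto
  qed
  then show "\<exists>\<delta>'>0. \<forall>U. nbhd hausdorff_dist (finite_hyperspace X) A U \<longrightarrow>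
      (\<exists>n\<ge>1. gdiam hausdorff_dist (induced (omega f) n ` U) > \<delta>')"
    using \<open>r > 0\<close> by (intro exI[of _ "r / 2"]) auto
qed

end
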